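(* Let $k\ge0$, $p\in[0,1]$, fix sequences $\xi^x,\xi^y$, and let $I=\bigcup_{i=i_0}^{i_1}I^x_{(k,i)}$ with $0\le i_1-i_0\le L-1$. Suppose there is $i'\in[i_0,i_1]$ with $H^x_{(k,i')}=h>0$ and $H^x_{(k,i)}=0$ for all $i\in[i_0,i_1]\setminus\{i'\}$. If $S$ is the union of a $k$-ordered family of $2^l$ $k$-fractal sets, with $l\ge4h$, then $$\mathbb{P}^{\xi^x,\xi^y}_p\big[\mathcal{R}_k(S,I)\text{ does not contain a }k\text{-ordered family of }2^{l-4h}\ k\text{-fractal sets}\big]\le L^5\big(\max\{u_k(p),v_k(p)\}\big)^2.$$
   Context: $L=10^6$, $L_k=L^k$, $M_k=\{k\}\times\mathbb{Z}$, $I_{(k,i)}=[iL_k,(i+1)L_k)\cap\mathbb{Z}$; for $m=(k+1,i)$, $\mathcal{Q}_m=\{(k,iL+j):0\le j\le L-1\}$. For a sequence $\xi=(\xi_i)$ of nonnegative integers define $H_m$: $H_{(0,i)}=\xi_i$; for $m\in M_{k+1}$, $H_m=0$ if all $m'\in\mathcal{Q}_m$ are good, $H_m=H_{m_1}-1$ if $m_1$ is the unique bad element of $\mathcal{Q}_m$, $H_m=1+\sum_{i=1}^rH_{m_i}$ if $m_1,\dots,m_r$ ($r\ge2$) are the bad elements; $m$ is good iff $H_m=0$. $H^x_m,H^y_m$ are computed from $\xi^x,\xi^y$; $I^x_m,I^y_m$ denote $I_m$ viewed horizontally/vertically. $\mathbb{P}^{\xi^x,\xi^y}_p$: independent bond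 percolation on $\mathbb{Z}^2$, $\{(i,j),(i+1,j)\}$ open with probability $p^{\xi^x_i+1}$, $\{(i,j),(i,j+1)\}$ open with probability $p^{\xi^y_j+1}$. $Z_k(S)=\{m\in M_k:I_m\cap S\ne\emptyset\}$; $Z\prec Z'$ means $(k,i)\in Z,(k,j)\in Z'\Rightarrow i<j$; $S_1,\dots,S_n$ is $k$-ordered if $Z_k(S_1)\prec\dots\prec Z_k(S_n)$. $S$ is $k$-good if all $m\in Z_k(S)$ have $H^y_m=0$. $\{i\}$ is $0$-fractal iff $\xi^y_i=0$; for $k\ge1$, $S$ is $k$-fractal if $S=S_1\cup\dots\cup S_{2^{10}}$, $S$ $k$-good, $(S_i)$ $(k-1)$-ordered, each $S_i$ $(k-1)$-fractal. $k$-grouped: $S\subseteq I_m$ for some $m\in M_k$. A set $A$ "contains a $k$-ordered family of $N$ $k$-fractal sets" if there are $S'_1,\dots,S'_N\subseteq A$, each $k$-fractal, forming a $k$-ordered family. For a rectangle $R=[a,b)\times[c,d)$ (vertices $[a,b]\times[c,d]\cap\mathbb{Z}^2$, edges $\{z,w\}$, $|z-w|=1$, $z\in[a,b]\times[c,d]$, $w\in[a,b)\times[c,d)$), $\mathcal{R}(S,R)$ = set of $y$ with $(b,y)\in\{b\}\times[c,d]$ joined to $\{a\}\times S$ by an open path in $R$. For a finite interval $I=[a,b)$, $\mathcal{R}_k(S,I)=\bigcup_{m'\in Z_k(S)}\mathcal{R}(S\cap I^y_{m'},I\times I^y_{m'})$. $u_k(p)=\sup\mathbb{P}^{\xi^x,\xi^y}_p[\mathcal{R}_k(S,I^x_m)$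 contains no $k$-grouped $k$-fractal set$]$ over $S,m\in M_k,\xi^x,\xi^y$ with $S$ $k$-fractal and $H^x_m=0$. $v_k(p)=\sup\mathbb{P}^{\xi^x,\xi^y}_p[\mathcal{R}_k(S,I^x_m)$ contains no $k$-fractal set$]$ over $h\ge1,S,m\in M_k,\xi^x,\xi^y$ with $H^x_m=h$ and $S$ the union of a $k$-ordered family of $2^{4(h-1)}$ $k$-fractal sets. *)

theory Defs
  imports "HOL-Probability.Probability"
begin

text \<open>The scale constant L = 10^6; blocks M_k = {k} x Z are indexed by (k, i).\<close>
definition Lc :: int where "Lc = 10^6"

definition Ik :: "nat \<Rightarrow> int \<Rightarrow> int set" where
  "Ik k i = {i * Lc ^ k ..< (i + 1) * Lc ^ k}"

text \<open>H_m for m = (k,i), computed from a sequence xi of nonnegative integers.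
  Q_(k+1,i) = {(k, i L + j) : 0 <= j <= L-1}; bad children are those with H <> 0.\<close>
primrec H :: "(int \<Rightarrow> nat) \<Rightarrow> nat \<Rightarrow> int \<Rightarrow> nat" where
  "H \<xi> 0 i = \<xi> i"
| "H \<xi> (Suc k) i =
     (if {j \<in> {0..<Lc}. H \<xi> k (i * Lc + j) \<noteq> 0} = {} then 0
      else if card {j \<in> {0..<Lc}. H \<xi> k (i * Lc + j) \<noteq> 0} = 1
      then H \<xi> k (i * Lc + the_elem {j \<in> {0..<Lc}. H \<xi> k (i * Lc + j) \<noteq> 0}) - 1
      else 1 + (\<Sum>j\<in>{j \<in> {0..<Lc}. H \<xi> k (i * Lc + j) \<noteq> 0}. H \<xi> k (i * Lc + j)))"

definition good :: "(int \<Rightarrow> nat) \<Rightarrow> nat \<Rightarrow> int \<Rightarrow> bool" where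
  "good \<xi> k i \<longleftrightarrow> H \<xi> k i = 0"

definition Zk :: "nat \<Rightarrow> int set \<Rightarrow> int set" where
  "Zk k S = {i. Ik k i \<inter> S \<noteq> {}}"

definition precZ :: "int set \<Rightarrow> int set \<Rightarrow> bool" where
  "precZ Z Z' \<longleftrightarrow> (\<forall>i\<in>Z. \<forall>j\<in>Z'. i < j)"

definition k_ordered :: "nat \<Rightarrow> int set list \<Rightarrow> bool" where
  "k_ordered k Ss \<longleftrightarrow>
     (\<forall>a b. a < b \<and> b < length Ss \<longrightarrow> precZ (Zk k (Ss ! a)) (Zk k (Ss ! b)))"

definition k_good :: "(int \<Rightarrow> nat) \<Rightarrow> nat \<Rightarrow> int set \<Rightarrow> bool" where
  "k_good \<xi>y k S \<longleftrightarrow> (\<forall>m\<in>Zk k S. H \<xi>y k m = 0)"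

primrec fractal :: "(int \<Rightarrow> nat) \<Rightarrow> nat \<Rightarrow> int set \<Rightarrow> bool" where
  "fractal \<xi>y 0 S = (\<exists>i. S = {i} \<and> \<xi>y i = 0)"
| "fractal \<xi>y (Suc k) S =
     (\<exists>Ss. length Ss = 2 ^ 10 \<and> S = \<Union>(set Ss) \<and> k_good \<xi>y (Suc k) S \<and>
           k_ordered k Ss \<and> (\<forall>T\<in>set Ss. fractal \<xi>y k T))"

definition grouped :: "nat \<Rightarrow> int set \<Rightarrow> bool" where
  "grouped k S \<longleftrightarrow> (\<exists>i. S \<subseteq> Ik k i)"

definition contains_family :: "(int \<Rightarrow> nat) \<Rightarrow> nat \<Rightarrow> nat \<Rightarrow> int set \<Rightarrow> bool" where
  "contains_family \<xi>y k N A \<longleftrightarrow>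
     (\<exists>Ss. length Ss = N \<and> (\<forall>T\<in>set Ss. T \<subseteq> A \<and> fractal \<xi>y k T) \<and> k_ordered k Ss)"

text \<open>Edges of Z^2: ((x,y),True) is {(x,y),(x+1,y)} (horizontal),
  ((x,y),False) is {(x,y),(x,y+1)} (vertical).\<close>
type_synonym edge = "(int \<times> int) \<times> bool"

fun ends :: "edge \<Rightarrow> (int \<times> int) set" where
  "ends ((x, y), True) = {(x, y), (x + 1, y)}"
| "ends ((x, y), False) = {(x, y), (x, y + 1)}"

fun edge_prob :: "real \<Rightarrow> (int \<Rightarrow> nat) \<Rightarrow> (int \<Rightarrow> nat) \<Rightarrow> edge \<Rightarrow> real" where
  "edge_prob p \<xi>x \<xi>y ((x, y), True) = p ^ (\<xi>x x + 1)"
| "edge_prob p \<xi>x \<xi>y ((x, y), False) = p ^ (\<xi>y y + 1)"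

text \<open>Independent bond percolation: configurations are maps edge => bool (True = open).\<close>
definition perc :: "real \<Rightarrow> (int \<Rightarrow> nat) \<Rightarrow> (int \<Rightarrow> nat) \<Rightarrow> (edge \<Rightarrow> bool) measure" where
  "perc p \<xi>x \<xi>y = (\<Pi>\<^sub>M e\<in>UNIV. measure_pmf (bernoulli_pmf (edge_prob p \<xi>x \<xi>y e)))"

definition Pr :: "real \<Rightarrow> (int \<Rightarrow> nat) \<Rightarrow> (int \<Rightarrow> nat) \<Rightarrow> ((edge \<Rightarrow> bool) \<Rightarrow> bool) \<Rightarrow> real" where
  "Pr p \<xi>x \<xi>y A = measure (perc p \<xi>x \<xi>y) {\<omega> \<in> space (perc p \<xi>x \<xi>y). A \<omega>}"

text \<open>Rectangle R = [a,b) x [c,d): vertices [a,b] x [c,d]; edges {z,w} with |z-w|=1,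
  z in [a,b] x [c,d], w in [a,b) x [c,d).\<close>
definition edge_in_rect :: "int \<Rightarrow> int \<Rightarrow> int \<Rightarrow> int \<Rightarrow> edge \<Rightarrow> bool" where
  "edge_in_rect a b c d e \<longleftrightarrow>
     (\<exists>z w. ends e = {z, w} \<and>
        a \<le> fst z \<and> fst z \<le> b \<and> c \<le> snd z \<and> snd z \<le> d \<and>
        a \<le> fst w \<and> fst w < b \<and> c \<le> snd w \<and> snd w < d)"

definition open_adj :: "(edge \<Rightarrow> bool) \<Rightarrow> int \<Rightarrow> int \<Rightarrow> int \<Rightarrow> int \<Rightarrow> int \<times> int \<Rightarrow> int \<times> int \<Rightarrow> bool" where
  "open_adj \<omega> a b c d u v \<longleftrightarrow> (\<exists>e. edge_in_rect a b c d e \<and> \<omega> e \<and> ends e = {u, v})"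

definition Rreach :: "(edge \<Rightarrow> bool) \<Rightarrow> int \<Rightarrow> int \<Rightarrow> int \<Rightarrow> int \<Rightarrow> int set \<Rightarrow> int set" where
  "Rreach \<omega> a b c d S =
     {y. c \<le> y \<and> y \<le> d \<and> (\<exists>s\<in>S. (open_adj \<omega> a b c d)\<^sup>*\<^sup>* (a, s) (b, y))}"

definition Rk :: "(edge \<Rightarrow> bool) \<Rightarrow> nat \<Rightarrow> int set \<Rightarrow> int \<Rightarrow> int \<Rightarrow> int set" where
  "Rk \<omega> k S a b =
     (\<Union>m\<in>Zk k S. Rreach \<omega> a b (m * Lc ^ k) ((m + 1) * Lc ^ k) (S \<inter> Ik k m))"

definition u :: "nat \<Rightarrow> real \<Rightarrow> real" where
  "u k p = Sup {Pr p \<xi>x \<xi>y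
       (\<lambda>\<omega>. \<not> (\<exists>T. T \<subseteq> Rk \<omega> k S (m * Lc ^ k) ((m + 1) * Lc ^ k) \<and> grouped k T \<and> fractal \<xi>y k T))
     | S m \<xi>x \<xi>y. fractal \<xi>y k S \<and> H \<xi>x k m = 0}"

definition v :: "nat \<Rightarrow> real \<Rightarrow> real" where
  "v k p = Sup {Pr p \<xi>x \<xi>y
       (\<lambda>\<omega>. \<not> (\<exists>T. T \<subseteq> Rk \<omega> k S (m * Lc ^ k) ((m + 1) * Lc ^ k) \<and> fractal \<xi>y k T))
     | h S m \<xi>x \<xi>y Ss. h \<ge> 1 \<and> H \<xi>x k m = h \<and> length Ss = 2 ^ (4 * (h - 1)) \<and>
         k_ordered k Ss \<and> (\<forall>T\<in>set Ss. fractal \<xi>y k T) \<and> S = \<Union>(set Ss)}"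

end

theory Submission
  imports Defs
begin

(* Write L = Lc, gamma = L * max(u, v), B = 2^(4(h-1)) and N = 2^(l-4h), so that the family
   has 16 B N members. The strip I consists of good columns of blocks and the single bad column i'.

   First stage: each member of the family crosses the good columns left of i' except with
   probability at most (i' - i0) u <= gamma, and these events are independent because the members
   occupy disjoint rows. So with probability at least 1 - 2^(16BN) gamma^(8BN) at least 8BN of
   them cross, and the fractal sets they reach at x = i' L^k, taken in order, form 8N k-ordered
   groups of B fractal sets each.

   Second stage: conditionally on the coins left of i' L^k, each group crosses the bad column (by
   the definition of v) and then the good columns up to (i1 + 1) L^k except with probability at
   most v + (i1 - i') u <= gamma, again independently. Fewer than 7N + 1 failures leave N crossing
   groups, whose crossings give the required k-ordered family; 7N + 1 failures have probability at
   most 2^(8N) gamma^(7N+1).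

   When 4 gamma <= 1 both terms are at most 272 gamma^2 <= L^5 max(u, v)^2, and otherwise the
   bound exceeds 1. *)

section \<open>Events determined by finitely many coins\<close>

definition depends_on :: "'e set \<Rightarrow> (('e \<Rightarrow> bool) \<Rightarrow> bool) \<Rightarrow> bool" where
  "depends_on K A \<longleftrightarrow> (\<forall>\<omega> \<omega>'. (\<forall>e\<in>K. \<omega> e = \<omega>' e) \<longrightarrow> A \<omega> = A \<omega>')"

lemma depends_onD: "depends_on K A \<Longrightarrow> (\<And>e. e \<in> K \<Longrightarrow> \<omega> e = \<omega>' e) \<Longrightarrow> A \<omega> = A \<omega>'"
  unfolding depends_on_def by blast

lemma depends_on_restrict: "depends_on K A \<Longrightarrow> A (restrict \<omega> K) = A \<omega>"
  using depends_onD[of K A "restrict \<omega> K" \<omega>] by simp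

lemma depends_on_mono: "depends_on K A \<Longrightarrow> K \<subseteq> K' \<Longrightarrow> depends_on K' A"
  unfolding depends_on_def by blast

lemma depends_on_const: "depends_on {} (\<lambda>\<omega>. P)"
  unfolding depends_on_def by simp

lemma depends_on_disj:
  "depends_on K1 A \<Longrightarrow> depends_on K2 B \<Longrightarrow> depends_on (K1 \<union> K2) (\<lambda>\<omega>. A \<omega> \<or> B \<omega>)"
  unfolding depends_on_def by (metis UnCI)

lemma depends_on_conj:
  "depends_on K1 A \<Longrightarrow> depends_on K2 B \<Longrightarrow> depends_on (K1 \<union> K2) (\<lambda>\<omega>. A \<omega> \<and> B \<omega>)"
  unfolding depends_on_def by (metis UnCI)

lemma depends_on_restrict_eq: "depends_on K (\<lambda>\<omega>. restrict \<omega> K = c)"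
  unfolding depends_on_def by (auto simp: restrict_def fun_eq_iff)

lemma depends_on_Ball:
  assumes "\<And>g. g \<in> G \<Longrightarrow> depends_on (K g) (A g)"
  shows "depends_on (\<Union>g\<in>G. K g) (\<lambda>\<omega>. \<forall>g\<in>G. A g \<omega>)"
  unfolding depends_on_def
proof (intro allI impI)
  fix \<omega> \<omega>' :: "_ \<Rightarrow> bool" assume "\<forall>e\<in>(\<Union>g\<in>G. K g). \<omega> e = \<omega>' e"
  then have "A g \<omega> = A g \<omega>'" if "g \<in> G" for g
    using that by (intro depends_onD[OF assms]) auto
  then show "(\<forall>g\<in>G. A g \<omega>) = (\<forall>g\<in>G. A g \<omega>')" by auto
qed

lemma depends_on_conditional:
  assumes "\<And>c. depends_on (K' c) (B c)"
  shows "depends_on (K \<union> (\<Union>c\<in>K \<rightarrow>\<^sub>E UNIV. K' c)) (\<lambda>\<omega>. B (restrict \<omega> K) \<omega>)"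
  unfolding depends_on_def
proof (intro allI impI)
  fix \<omega> \<omega>' :: "_ \<Rightarrow> bool"
  assume eq: "\<forall>e\<in>K \<union> (\<Union>c\<in>K \<rightarrow>\<^sub>E UNIV. K' c). \<omega> e = \<omega>' e"
  then have "restrict \<omega> K = restrict \<omega>' K" by (auto simp: restrict_def fun_eq_iff)
  moreover have "B (restrict \<omega> K) \<omega> = B (restrict \<omega> K) \<omega>'"
    using eq by (intro depends_onD[OF assms]) auto
  ultimately show "B (restrict \<omega> K) \<omega> = B (restrict \<omega>' K) \<omega>'" by simp
qed

lemma sets_PiM_pmf_depends_on:
  assumes "finite K" "depends_on K A" "K \<subseteq> I"
  shows "{\<omega> \<in> space (\<Pi>\<^sub>M e\<in>I. measure_pmf (Q e)). A \<omega>} \<in> sets (\<Pi>\<^sub>M e\<in>I. measure_pmf (Q e))"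
    (is "_ \<in> sets ?M")
proof -
  have "{\<omega> \<in> space ?M. A \<omega>} = (\<Union>c\<in>{c \<in> K \<rightarrow>\<^sub>E UNIV. A c}. {\<omega> \<in> space ?M. \<forall>e\<in>K. \<omega> e = c e})"
  proof (intro equalityI subsetI)
    fix \<omega> assume "\<omega> \<in> {\<omega> \<in> space ?M. A \<omega>}"
    then show "\<omega> \<in> (\<Union>c\<in>{c \<in> K \<rightarrow>\<^sub>E UNIV. A c}. {\<omega> \<in> space ?M. \<forall>e\<in>K. \<omega> e = c e})"
      using depends_on_restrict[OF assms(2)] by (intro UN_I[of "restrict \<omega> K"]) auto
  next
    fix \<omega> assume "\<omega> \<in> (\<Union>c\<in>{c \<in> K \<rightarrow>\<^sub>E UNIV. A c}. {\<omega> \<in> space ?M. \<forall>e\<in>K. \<omega> e = c e})"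
    then show "\<omega> \<in> {\<omega> \<in> space ?M. A \<omega>}" using assms(2) unfolding depends_on_def by auto
  qed
  also have "\<dots> \<in> sets ?M"
  proof (rule sets.finite_UN)
    show "finite {c \<in> K \<rightarrow>\<^sub>E (UNIV :: bool set). A c}"
      by (rule finite_subset[of _ "K \<rightarrow>\<^sub>E UNIV"]) (auto intro!: finite_PiE assms(1))
    fix c :: "_ \<Rightarrow> bool"
    show "{\<omega> \<in> space ?M. \<forall>e\<in>K. \<omega> e = c e} \<in> sets ?M"
      using assms(1) by measurable (use assms(3) in auto)
  qed
  finally show ?thesis .
qed

locale coin_field =
  fixes Q :: "'e \<Rightarrow> bool pmf"
begin

definition coin_space :: "('e \<Rightarrow> bool) measure" where
  "coin_space = (\<Pi>\<^sub>M e\<in>UNIV. measure_pmf (Q e))"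

definition event_prob :: "(('e \<Rightarrow> bool) \<Rightarrow> bool) \<Rightarrow> real" where
  "event_prob A = measure coin_space {\<omega> \<in> space coin_space. A \<omega>}"

sublocale prob_space coin_space
  unfolding coin_space_def by (rule prob_space_PiM) (rule prob_space_measure_pmf)

lemma space_coin_space [simp]: "space coin_space = UNIV"
  by (simp add: coin_space_def space_PiM)

lemma event_prob_eq_prob: "event_prob A = prob {\<omega>. A \<omega>}"
  by (simp add: event_prob_def)

lemma event_prob_nonneg: "0 \<le> event_prob A"
  by (simp add: event_prob_def)

lemma event_prob_le_1: "event_prob A \<le> 1"
  by (simp add: event_prob_def)

lemma event_prob_False: "event_prob (\<lambda>\<omega>. False) = 0"
  by (simp add: event_prob_def)

lemma sets_coin_space_depends_on:
  assumes "finite K" "depends_on K A"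
  shows "{\<omega>. A \<omega>} \<in> sets coin_space"
  using sets_PiM_pmf_depends_on[OF assms, of UNIV Q] by (simp add: coin_space_def space_PiM)

lemma event_prob_mono:
  assumes "\<And>\<omega>. A \<omega> \<Longrightarrow> B \<omega>" "finite K" "depends_on K B"
  shows "event_prob A \<le> event_prob B"
  unfolding event_prob_eq_prob
  using assms sets_coin_space_depends_on[OF assms(2,3)] by (intro finite_measure_mono) auto

lemma event_prob_disj_le:
  assumes "finite K1" "depends_on K1 A" "finite K2" "depends_on K2 B"
  shows "event_prob (\<lambda>\<omega>. A \<omega> \<or> B \<omega>) \<le> event_prob A + event_prob B"
proof -
  have "{\<omega>. A \<omega> \<or> B \<omega>} = {\<omega>. A \<omega>} \<union> {\<omega>. B \<omega>}" by auto
  then show ?thesis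
    unfolding event_prob_eq_prob
    using measure_Un_le[OF sets_coin_space_depends_on[OF assms(1,2)] sets_coin_space_depends_on[OF assms(3,4)]]
    by simp
qed

lemma indep_vars_coordinates: "indep_vars (\<lambda>e. measure_pmf (Q e)) (\<lambda>e \<omega>. \<omega> e) UNIV"
proof -
  have rv: "\<And>e. random_variable (measure_pmf (Q e)) (\<lambda>\<omega>. \<omega> e)"
    unfolding coin_space_def by (rule measurable_component_singleton) simp
  have distr_e: "\<And>e. distr coin_space (measure_pmf (Q e)) (\<lambda>\<omega>. \<omega> e) = measure_pmf (Q e)"
    unfolding coin_space_def by (rule distr_PiM_component) (simp_all add: prob_space_measure_pmf)
  have "distr coin_space (\<Pi>\<^sub>M e\<in>UNIV. measure_pmf (Q e)) (\<lambda>\<omega>. \<lambda>e\<in>UNIV. \<omega> e) = coin_space"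
    by (simp add: restrict_UNIV coin_space_def distr_id2)
  also have "\<dots> = (\<Pi>\<^sub>M e\<in>UNIV. distr coin_space (measure_pmf (Q e)) (\<lambda>\<omega>. \<omega> e))"
    by (simp only: distr_e) (simp only: coin_space_def)
  finally show ?thesis
    by (subst indep_vars_iff_distr_eq_PiM[OF _ rv]) simp_all
qed

lemma event_prob_Ball_indep:
  assumes G: "finite G" and disj: "disjoint_family_on K G"
    and K: "\<And>g. g \<in> G \<Longrightarrow> finite (K g)" and A: "\<And>g. g \<in> G \<Longrightarrow> depends_on (K g) (A g)"
  shows "event_prob (\<lambda>\<omega>. \<forall>g\<in>G. A g \<omega>) = (\<Prod>g\<in>G. event_prob (A g))"
proof (cases "G = {}")
  case True
  then show ?thesis using prob_space by (simp add: event_prob_eq_prob)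
next
  case False
  have "indep_vars (\<lambda>g. \<Pi>\<^sub>M e\<in>K g. measure_pmf (Q e)) (\<lambda>g \<omega>. restrict \<omega> (K g)) G"
    by (rule indep_vars_restrict[OF indep_vars_coordinates _ disj]) simp
  then have "indep_events (\<lambda>g. {\<omega> \<in> space coin_space. A g (restrict \<omega> (K g))}) G"
    by (rule indep_eventsI_indep_vars) (use sets_PiM_pmf_depends_on[OF K A] in auto)
  then have "prob (\<Inter>g\<in>G. {\<omega>. A g (restrict \<omega> (K g))}) = (\<Prod>g\<in>G. prob {\<omega>. A g (restrict \<omega> (K g))})"
    using G False unfolding indep_events_def by simp
  moreover have "(\<Inter>g\<in>G. {\<omega>. A g (restrict \<omega> (K g))}) = {\<omega>. \<forall>g\<in>G. A g \<omega>}"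
    using depends_on_restrict[OF A] by auto
  ultimately show ?thesis
    using depends_on_restrict[OF A] by (simp add: event_prob_eq_prob)
qed

lemma event_prob_conj_indep:
  assumes "finite K1" "finite K2" "K1 \<inter> K2 = {}" "depends_on K1 A" "depends_on K2 B"
  shows "event_prob (\<lambda>\<omega>. A \<omega> \<and> B \<omega>) = event_prob A * event_prob B"
proof -
  let ?K = "\<lambda>g::bool. if g then K1 else K2"
  let ?A = "\<lambda>g::bool. if g then A else B"
  have disj: "disjoint_family_on ?K UNIV" using assms(3) by (auto simp: disjoint_family_on_def)
  have "event_prob (\<lambda>\<omega>. \<forall>g\<in>UNIV. ?A g \<omega>) = (\<Prod>g\<in>UNIV. event_prob (?A g))"
    by (rule event_prob_Ball_indep[of UNIV ?K ?A, OF _ disj]) (use assms in auto)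
  moreover have "(\<lambda>\<omega>. \<forall>g\<in>UNIV. ?A g \<omega>) = (\<lambda>\<omega>. A \<omega> \<and> B \<omega>)" by (auto simp: UNIV_bool)
  ultimately show ?thesis by (simp add: UNIV_bool mult.commute)
qed

lemma event_prob_conditional_le:
  assumes E: "finite E" and E': "\<And>c. finite (E' c)" "\<And>c. E' c \<inter> E = {}"
    and B: "\<And>c. depends_on (E' c) (B c)" and b: "\<And>c. event_prob (B c) \<le> \<beta>"
  shows "event_prob (\<lambda>\<omega>. B (restrict \<omega> E) \<omega>) \<le> \<beta>"
proof -
  let ?C = "E \<rightarrow>\<^sub>E (UNIV :: bool set)"
  let ?Y = "\<lambda>c. {\<omega>. restrict \<omega> E = c}"
  let ?Z = "\<lambda>c. {\<omega>. restrict \<omega> E = c \<and> B c \<omega>}"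
  have C: "finite ?C" using E by (intro finite_PiE) auto
  have Y: "?Y c \<in> events" for c
    by (rule sets_coin_space_depends_on[OF E depends_on_restrict_eq])
  have Z: "?Z c \<in> events" for c
    using sets_coin_space_depends_on[OF _ depends_on_conj[OF depends_on_restrict_eq B]] E E'(1) by simp
  have "{\<omega>. B (restrict \<omega> E) \<omega>} = (\<Union>c\<in>?C. ?Z c)" by auto
  moreover have "prob (\<Union>c\<in>?C. ?Z c) = (\<Sum>c\<in>?C. prob (?Z c))"
    by (rule finite_measure_finite_Union[OF C]) (auto simp: Z disjoint_family_on_def)
  ultimately have "event_prob (\<lambda>\<omega>. B (restrict \<omega> E) \<omega>) = (\<Sum>c\<in>?C. prob (?Z c))"
    by (simp add: event_prob_eq_prob)
  also have "\<dots> = (\<Sum>c\<in>?C. prob (?Y c) * event_prob (B c))"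
  proof (rule sum.cong[OF refl])
    fix c
    have "event_prob (\<lambda>\<omega>. restrict \<omega> E = c \<and> B c \<omega>) = event_prob (\<lambda>\<omega>. restrict \<omega> E = c) * event_prob (B c)"
      by (rule event_prob_conj_indep[OF E E'(1) _ depends_on_restrict_eq B]) (use E'(2)[of c] in blast)
    then show "prob (?Z c) = prob (?Y c) * event_prob (B c)" by (simp add: event_prob_eq_prob)
  qed
  also have "\<dots> \<le> (\<Sum>c\<in>?C. prob (?Y c) * \<beta>)"
    by (intro sum_mono mult_left_mono b) simp
  also have "\<dots> = prob (\<Union>c\<in>?C. ?Y c) * \<beta>"
    unfolding sum_distrib_right[symmetric]
    by (rule arg_cong[where f="\<lambda>x. x * \<beta>"], rule finite_measure_finite_Union[symmetric, OF C])
       (auto simp: Y disjoint_family_on_def)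
  also have "\<dots> \<le> \<beta>"
    using b[of undefined] event_prob_nonneg[of "B undefined"] by (intro mult_left_le_one_le) auto
  finally show ?thesis .
qed

lemma event_prob_two_stage_le:
  assumes E: "finite E" "depends_on E B"
    and E': "\<And>c. finite (E' c)" "\<And>c. E' c \<inter> E = {}"
    and C: "\<And>c. depends_on (E' c) (C c)" "\<And>c. event_prob (C c) \<le> \<beta>"
    and A: "\<And>\<omega>. A \<omega> \<Longrightarrow> B \<omega> \<or> C (restrict \<omega> E) \<omega>"
  shows "event_prob A \<le> event_prob B + \<beta>"
proof -
  let ?K = "E \<union> (\<Union>c\<in>E \<rightarrow>\<^sub>E UNIV. E' c)"
  have K: "finite ?K" using E(1) E'(1) by (auto intro!: finite_PiE)
  have dep: "depends_on ?K (\<lambda>\<omega>. C (restrict \<omega> E) \<omega>)"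
    by (rule depends_on_conditional[OF C(1)])
  have "event_prob A \<le> event_prob (\<lambda>\<omega>. B \<omega> \<or> C (restrict \<omega> E) \<omega>)"
    by (rule event_prob_mono[OF A finite_UnI[OF E(1) K] depends_on_disj[OF E(2) dep]])
  also have "\<dots> \<le> event_prob B + event_prob (\<lambda>\<omega>. C (restrict \<omega> E) \<omega>)"
    by (rule event_prob_disj_le[OF E K dep])
  also have "\<dots> \<le> event_prob B + \<beta>"
    using event_prob_conditional_le[OF E(1) E' C] by simp
  finally show ?thesis .
qed

lemma event_prob_count_ge_le:
  assumes G: "finite G" and disj: "disjoint_family_on K G"
    and K: "\<And>g. g \<in> G \<Longrightarrow> finite (K g)" and A: "\<And>g. g \<in> G \<Longrightarrow> depends_on (K g) (A g)"
    and b: "\<And>g. g \<in> G \<Longrightarrow> event_prob (A g) \<le> \<beta>" and "0 \<le> \<beta>"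
  shows "event_prob (\<lambda>\<omega>. r \<le> card {g\<in>G. A g \<omega>}) \<le> 2 ^ card G * \<beta> ^ r"
proof -
  let ?RR = "{R. R \<subseteq> G \<and> card R = r}"
  let ?F = "\<lambda>R. {\<omega>. \<forall>g\<in>R. A g \<omega>}"
  have RR: "finite ?RR" by (rule finite_subset[of _ "Pow G"]) (auto simp: G)
  have F: "?F R \<in> events" if "R \<in> ?RR" for R
  proof (rule sets_coin_space_depends_on)
    show "finite (\<Union>g\<in>R. K g)" using that G K by (auto intro: finite_subset)
    show "depends_on (\<Union>g\<in>R. K g) (\<lambda>\<omega>. \<forall>g\<in>R. A g \<omega>)"
      using that A by (intro depends_on_Ball) auto
  qed
  have "{\<omega>. r \<le> card {g\<in>G. A g \<omega>}} \<subseteq> (\<Union>R\<in>?RR. ?F R)"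
  proof
    fix \<omega> assume "\<omega> \<in> {\<omega>. r \<le> card {g\<in>G. A g \<omega>}}"
    then obtain R where "R \<subseteq> {g\<in>G. A g \<omega>}" "card R = r"
      by (metis (no_types, lifting) mem_Collect_eq obtain_subset_with_card_n)
    then show "\<omega> \<in> (\<Union>R\<in>?RR. ?F R)" by auto
  qed
  then have "event_prob (\<lambda>\<omega>. r \<le> card {g\<in>G. A g \<omega>}) \<le> prob (\<Union>R\<in>?RR. ?F R)"
    unfolding event_prob_eq_prob using RR F by (intro finite_measure_mono) auto
  also have "\<dots> \<le> (\<Sum>R\<in>?RR. prob (?F R))"
    using RR F by (intro measure_UNION_le) auto
  also have "\<dots> \<le> (\<Sum>R\<in>?RR. \<beta> ^ r)"
  proof (rule sum_mono)
    fix R assume R: "R \<in> ?RR"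
    then have "finite R" using G finite_subset by blast
    then have "prob (?F R) = (\<Prod>g\<in>R. event_prob (A g))"
      using R event_prob_Ball_indep[of R K A] disjoint_family_on_mono[OF _ disj] K A
      by (auto simp: event_prob_eq_prob)
    also have "\<dots> \<le> (\<Prod>g\<in>R. \<beta>)"
      using R b by (intro prod_mono) (auto simp: event_prob_nonneg)
    finally show "prob (?F R) \<le> \<beta> ^ r" using R by simp
  qed
  also have "\<dots> = card ?RR * \<beta> ^ r" by simp
  also have "\<dots> \<le> 2 ^ card G * \<beta> ^ r"
  proof (rule mult_right_mono)
    have "card ?RR \<le> card (Pow G)" using G by (intro card_mono) auto
    then show "real (card ?RR) \<le> 2 ^ card G"
      by (metis card_Pow[OF G] of_nat_le_iff of_nat_numeral of_nat_power)
  qed (use \<open>0 \<le> \<beta>\<close> in simp)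
  finally show ?thesis .
qed

end

interpretation perc: coin_field "\<lambda>e. bernoulli_pmf (edge_prob p \<xi>x \<xi>y e)"
  rewrites "coin_field.coin_space (\<lambda>e. bernoulli_pmf (edge_prob p \<xi>x \<xi>y e)) = perc p \<xi>x \<xi>y"
    and "coin_field.event_prob (\<lambda>e. bernoulli_pmf (edge_prob p \<xi>x \<xi>y e)) = Pr p \<xi>x \<xi>y"
  for p \<xi>x \<xi>y
proof -
  show "coin_field.coin_space (\<lambda>e. bernoulli_pmf (edge_prob p \<xi>x \<xi>y e)) = perc p \<xi>x \<xi>y"
    by (simp add: coin_field.coin_space_def perc_def)
  then show "coin_field.event_prob (\<lambda>e. bernoulli_pmf (edge_prob p \<xi>x \<xi>y e)) = Pr p \<xi>x \<xi>y"
    by (simp add: coin_field.event_prob_def Pr_def fun_eq_iff)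
qed

section \<open>Blocks, open paths and the sets Rk\<close>

lemma Lc_pow_pos: "0 < Lc ^ k"
  by (simp add: Lc_def)

lemma div_eq_iff_bounds:
  fixes s L :: int
  assumes "0 < L"
  shows "s div L = i \<longleftrightarrow> i * L \<le> s \<and> s < (i + 1) * L"
proof
  assume "s div L = i"
  moreover have "s = s div L * L + s mod L" "0 \<le> s mod L" "s mod L < L"
    using assms by simp_all
  ultimately show "i * L \<le> s \<and> s < (i + 1) * L" by (auto simp: algebra_simps)
next
  assume "i * L \<le> s \<and> s < (i + 1) * L"
  then have "(s - i * L) div L = 0" by (simp add: algebra_simps div_pos_pos_trivial)
  then show "s div L = i" using div_mult_self1[of L "s - i * L" i] assms by simp
qed

lemma mem_Ik_iff: "s \<in> Ik k i \<longleftrightarrow> s div Lc ^ k = i"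
  using div_eq_iff_bounds[OF Lc_pow_pos] by (auto simp: Ik_def)

lemma Zk_eq_image: "Zk k S = (\<lambda>s. s div Lc ^ k) ` S"
  unfolding Zk_def using mem_Ik_iff by auto

lemma Zk_mono: "S \<subseteq> S' \<Longrightarrow> Zk k S \<subseteq> Zk k S'"
  by (auto simp: Zk_eq_image)

lemma edge_in_rect_base:
  assumes "edge_in_rect a b c d ((x, y), t)"
  shows "a \<le> x \<and> x < b \<and> c \<le> y \<and> y < d"
proof -
  from assms obtain z w where zw: "ends ((x, y), t) = {z, w}"
    "a \<le> fst z" "fst z \<le> b" "c \<le> snd z" "snd z \<le> d"
    "a \<le> fst w" "fst w < b" "c \<le> snd w" "snd w < d"
    unfolding edge_in_rect_def by blast
  then show ?thesis by (cases t) (auto simp: doubleton_eq_iff)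
qed

lemma ends_aligned: "z \<in> ends e \<Longrightarrow> w \<in> ends e \<Longrightarrow> fst z = fst w \<or> snd z = snd w"
  by (cases e rule: ends.cases) auto

text \<open>Every edge of the rectangle has an endpoint in the half-open part, so an open path can
  reach the right side \<open>x = b\<close> only strictly below the top \<open>y = d\<close>.\<close>

lemma open_path_below_top:
  assumes "(open_adj \<omega> a b c d)\<^sup>*\<^sup>* q q'" "snd q < d \<or> fst q < b"
  shows "snd q' < d \<or> fst q' < b"
  using assms
proof (induction rule: rtranclp_induct)
  case (step y z)
  then obtain e where e: "edge_in_rect a b c d e" "ends e = {y, z}"
    unfolding open_adj_def by blast
  then obtain z' w' where w': "ends e = {z', w'}" "fst w' < b" "snd w' < d"
    unfolding edge_in_rect_def by blast
  have "z \<in> ends e" "w' \<in> ends e" using e(2) w'(1) by auto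
  from ends_aligned[OF this] show ?case using w'(2,3) by auto
qed

lemma Rreach_subset:
  assumes "\<forall>s\<in>S. s < d"
  shows "Rreach \<omega> a b c d S \<subseteq> {c..<d}"
proof
  fix y assume "y \<in> Rreach \<omega> a b c d S"
  then obtain s where "s \<in> S" "c \<le> y" "(open_adj \<omega> a b c d)\<^sup>*\<^sup>* (a, s) (b, y)"
    unfolding Rreach_def by blast
  with assms open_path_below_top[of \<omega> a b c d "(a, s)" "(b, y)"] show "y \<in> {c..<d}" by auto
qed

lemma Rk_memD:
  assumes "y \<in> Rk \<omega> k S a b"
  obtains m where "m \<in> Zk k S" "y \<in> Ik k m"
    "y \<in> Rreach \<omega> a b (m * Lc ^ k) ((m + 1) * Lc ^ k) (S \<inter> Ik k m)"
proof -
  from assms obtain m where m: "m \<in> Zk k S"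
    "y \<in> Rreach \<omega> a b (m * Lc ^ k) ((m + 1) * Lc ^ k) (S \<inter> Ik k m)"
    unfolding Rk_def by blast
  moreover have "\<forall>s\<in>S \<inter> Ik k m. s < (m + 1) * Lc ^ k" by (auto simp: Ik_def)
  from Rreach_subset[OF this, of \<omega> a b "m * Lc ^ k"] m(2)
  have "y \<in> {m * Lc ^ k..<(m + 1) * Lc ^ k}" by blast
  then have "y \<in> Ik k m" by (simp add: Ik_def)
  ultimately show ?thesis using that by blast
qed

lemma Zk_Rk_subset: "Zk k (Rk \<omega> k S a b) \<subseteq> Zk k S"
proof
  fix i assume "i \<in> Zk k (Rk \<omega> k S a b)"
  then obtain y where "y \<in> Rk \<omega> k S a b" "y \<in> Ik k i" unfolding Zk_def by blast
  then show "i \<in> Zk k S" by (metis Rk_memD mem_Ik_iff)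
qed

lemma Zk_subset_if_subset_Rk: "T \<subseteq> Rk \<omega> k S a b \<Longrightarrow> Zk k T \<subseteq> Zk k S"
  by (rule order_trans[OF Zk_mono Zk_Rk_subset])

lemma Rk_mono: "S \<subseteq> S' \<Longrightarrow> Rk \<omega> k S a b \<subseteq> Rk \<omega> k S' a b"
  unfolding Rk_def Rreach_def using Zk_mono by blast

lemma open_adj_widen:
  assumes "a' \<le> a" "b \<le> b'" "open_adj \<omega> a b c d q q'"
  shows "open_adj \<omega> a' b' c d q q'"
proof -
  from assms(3) obtain e z w where e: "ends e = {q, q'}" "\<omega> e" "ends e = {z, w}"
    "a \<le> fst z" "fst z \<le> b" "c \<le> snd z" "snd z \<le> d"
    "a \<le> fst w" "fst w < b" "c \<le> snd w" "snd w < d"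
    unfolding open_adj_def edge_in_rect_def by blast
  have "edge_in_rect a' b' c d e"
    unfolding edge_in_rect_def by (rule exI[where x=z], rule exI[where x=w]) (use e assms(1,2) in auto)
  then show ?thesis unfolding open_adj_def using e by blast
qed

lemma open_path_widen:
  assumes "a' \<le> a" "b \<le> b'" "(open_adj \<omega> a b c d)\<^sup>*\<^sup>* q q'"
  shows "(open_adj \<omega> a' b' c d)\<^sup>*\<^sup>* q q'"
  using assms(3) by (rule rtranclp_mono[THEN predicate2D, rotated]) (use assms(1,2) open_adj_widen in blast)

lemma Rk_trans:
  assumes "a \<le> b" "b \<le> c"
  shows "Rk \<omega> k (Rk \<omega> k S a b) b c \<subseteq> Rk \<omega> k S a c"
proof
  fix y assume "y \<in> Rk \<omega> k (Rk \<omega> k S a b) b c"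
  then obtain m where m: "m \<in> Zk k (Rk \<omega> k S a b)"
    "y \<in> Rreach \<omega> b c (m * Lc ^ k) ((m + 1) * Lc ^ k) (Rk \<omega> k S a b \<inter> Ik k m)"
    unfolding Rk_def by blast
  then obtain s' where s': "s' \<in> Rk \<omega> k S a b" "s' \<in> Ik k m" "m * Lc ^ k \<le> y" "y \<le> (m + 1) * Lc ^ k"
    "(open_adj \<omega> b c (m * Lc ^ k) ((m + 1) * Lc ^ k))\<^sup>*\<^sup>* (b, s') (c, y)"
    unfolding Rreach_def by blast
  obtain m' where m': "m' \<in> Zk k S" "s' \<in> Ik k m'"
    "s' \<in> Rreach \<omega> a b (m' * Lc ^ k) ((m' + 1) * Lc ^ k) (S \<inter> Ik k m')"
    using Rk_memD[OF s'(1)] by blast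
  have "m' = m" using m'(2) s'(2) by (simp add: mem_Ik_iff)
  with m'(3) obtain s where s: "s \<in> S \<inter> Ik k m"
    "(open_adj \<omega> a b (m * Lc ^ k) ((m + 1) * Lc ^ k))\<^sup>*\<^sup>* (a, s) (b, s')"
    unfolding Rreach_def by blast
  have "(open_adj \<omega> a c (m * Lc ^ k) ((m + 1) * Lc ^ k))\<^sup>*\<^sup>* (a, s) (c, y)"
    using open_path_widen[OF order_refl assms(2) s(2)] open_path_widen[OF assms(1) order_refl s'(5)]
    by (rule rtranclp_trans)
  then have "y \<in> Rreach \<omega> a c (m * Lc ^ k) ((m + 1) * Lc ^ k) (S \<inter> Ik k m)"
    unfolding Rreach_def using s s'(3,4) by blast
  then show "y \<in> Rk \<omega> k S a c" unfolding Rk_def using m'(1) \<open>m' = m\<close> by blast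
qed

lemma subset_Rk_self: "S \<subseteq> Rk \<omega> k S a a"
proof
  fix y assume y: "y \<in> S"
  define m where "m = y div Lc ^ k"
  have m: "y \<in> Ik k m" by (simp add: mem_Ik_iff m_def)
  then have "y \<in> Rreach \<omega> a a (m * Lc ^ k) ((m + 1) * Lc ^ k) (S \<inter> Ik k m)"
    using y unfolding Rreach_def by (auto simp: Ik_def)
  moreover have "m \<in> Zk k S" using y m unfolding Zk_def by blast
  ultimately show "y \<in> Rk \<omega> k S a a" unfolding Rk_def by blast
qed

definition strip_edges :: "nat \<Rightarrow> int set \<Rightarrow> int \<Rightarrow> int \<Rightarrow> edge set" where
  "strip_edges k S a b = {e. a \<le> fst (fst e) \<and> fst (fst e) < b \<and> snd (fst e) div Lc ^ k \<in> Zk k S}"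

lemma Rk_cong:
  assumes agree: "\<And>e. e \<in> strip_edges k S a b \<Longrightarrow> \<omega> e = \<omega>' e"
  shows "Rk \<omega> k S a b = Rk \<omega>' k S a b"
proof -
  have "open_adj \<omega> a b (m * Lc ^ k) ((m + 1) * Lc ^ k) = open_adj \<omega>' a b (m * Lc ^ k) ((m + 1) * Lc ^ k)"
    if m: "m \<in> Zk k S" for m
  proof -
    have "\<omega> e = \<omega>' e" if "edge_in_rect a b (m * Lc ^ k) ((m + 1) * Lc ^ k) e" for e
    proof -
      obtain x y t where e: "e = ((x, y), t)" by (metis prod.collapse)
      with that have "a \<le> x" "x < b" "y \<in> Ik k m"
        using edge_in_rect_base by (auto simp: Ik_def)
      then have "e \<in> strip_edges k S a b" using m e by (simp add: strip_edges_def mem_Ik_iff)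
      then show ?thesis by (rule agree)
    qed
    then show ?thesis unfolding open_adj_def by (intro ext) blast
  qed
  then show ?thesis
    unfolding Rk_def Rreach_def by (intro SUP_cong refl) simp
qed

lemma depends_on_Rk: "depends_on (strip_edges k S a b) (\<lambda>\<omega>. \<Phi> (Rk \<omega> k S a b))"
  unfolding depends_on_def using Rk_cong by metis

lemma finite_strip_edges: "finite S \<Longrightarrow> finite (strip_edges k S a b)"
proof -
  assume "finite S"
  then have "finite (({a..<b} \<times> (\<Union>m\<in>Zk k S. Ik k m)) \<times> (UNIV :: bool set))"
    by (auto simp: Zk_eq_image Ik_def)
  moreover have "strip_edges k S a b \<subseteq> ({a..<b} \<times> (\<Union>m\<in>Zk k S. Ik k m)) \<times> UNIV"
    by (auto simp: strip_edges_def mem_Ik_iff)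
  ultimately show ?thesis by (rule finite_subset[rotated])
qed

lemma strip_edges_disjoint_columns: "b \<le> a' \<Longrightarrow> strip_edges k S a b \<inter> strip_edges k S' a' b' = {}"
  by (auto simp: strip_edges_def)

lemma strip_edges_disjoint_rows:
  "Zk k S \<inter> Zk k S' = {} \<Longrightarrow> strip_edges k S a b \<inter> strip_edges k S' a' b' = {}"
  by (auto simp: strip_edges_def)

lemma strip_edges_mono: "S \<subseteq> S' \<Longrightarrow> strip_edges k S a b \<subseteq> strip_edges k S' a b"
  unfolding strip_edges_def using Zk_mono[of S S' k] by blast

section \<open>Crossing witnesses and their groups\<close>

definition chunks :: "nat \<Rightarrow> nat \<Rightarrow> 'a list \<Rightarrow> 'a list list" where
  "chunks B m xs = map (\<lambda>g. take B (drop (g * B) xs)) [0..<m]"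

lemma length_chunks [simp]: "length (chunks B m xs) = m"
  by (simp add: chunks_def)

lemma set_chunk_subset: "Fs \<in> set (chunks B m xs) \<Longrightarrow> set Fs \<subseteq> set xs"
  by (auto simp: chunks_def dest: in_set_takeD in_set_dropD)

lemma length_chunk:
  assumes "m * B \<le> length xs" "Fs \<in> set (chunks B m xs)"
  shows "length Fs = B"
proof -
  obtain g where "g < m" "Fs = take B (drop (g * B) xs)" using assms(2) by (auto simp: chunks_def)
  moreover have "g * B + B \<le> m * B" using \<open>g < m\<close> by (metis add.commute mult_Suc mult_le_mono1 Suc_leI)
  ultimately show ?thesis using assms(1) by simp
qed

lemma sorted_wrt_chunk: "sorted_wrt R xs \<Longrightarrow> Fs \<in> set (chunks B m xs) \<Longrightarrow> sorted_wrt R Fs"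
  by (auto simp: chunks_def)

lemma sorted_wrt_chunks:
  assumes "sorted_wrt R xs"
  shows "sorted_wrt (\<lambda>Fs Gs. \<forall>x\<in>set Fs. \<forall>y\<in>set Gs. R x y) (chunks B m xs)"
  unfolding chunks_def sorted_wrt_map
proof (rule sorted_wrt_mono_rel[OF _ sorted_wrt_upt])
  fix g h :: nat assume "g < h"
  then have "B + g * B \<le> h * B" by (metis add.commute mult_Suc mult_le_mono1 Suc_leI)
  then have "set (take B (drop (g * B) xs)) \<subseteq> set (take (h * B) xs)"
    unfolding take_drop by (meson order_trans set_drop_subset set_take_subset_set_take)
  moreover have "set (take B (drop (h * B) xs)) \<subseteq> set (drop (h * B) xs)" by (rule set_take_subset)
  moreover have "\<forall>x\<in>set (take (h * B) xs). \<forall>y\<in>set (drop (h * B) xs). R x y"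
    using assms sorted_wrt_append[of R "take (h * B) xs" "drop (h * B) xs"] by simp
  ultimately show "\<forall>x\<in>set (take B (drop (g * B) xs)). \<forall>y\<in>set (take B (drop (h * B) xs)). R x y"
    by blast
qed

lemma fractal_finite: "fractal \<xi>y k T \<Longrightarrow> finite T"
  by (induction k arbitrary: T) auto

definition contains_fractal :: "(int \<Rightarrow> nat) \<Rightarrow> nat \<Rightarrow> int set \<Rightarrow> bool" where
  "contains_fractal \<xi>y k A \<longleftrightarrow> (\<exists>T\<subseteq>A. fractal \<xi>y k T)"

definition some_fractal :: "(int \<Rightarrow> nat) \<Rightarrow> nat \<Rightarrow> int set \<Rightarrow> int set" where
  "some_fractal \<xi>y k A = (SOME T. T \<subseteq> A \<and> fractal \<xi>y k T)"

lemma some_fractal: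
  assumes "contains_fractal \<xi>y k A"
  shows "some_fractal \<xi>y k A \<subseteq> A" "fractal \<xi>y k (some_fractal \<xi>y k A)"
  using someI_ex[of "\<lambda>T. T \<subseteq> A \<and> fractal \<xi>y k T"] assms
  unfolding contains_fractal_def some_fractal_def by blast+

lemma contains_fractal_mono: "A \<subseteq> B \<Longrightarrow> contains_fractal \<xi>y k A \<Longrightarrow> contains_fractal \<xi>y k B"
  unfolding contains_fractal_def by blast

lemma Rk_subset_trans:
  assumes "a \<le> b" "b \<le> c" "T \<subseteq> Rk \<omega> k S a b"
  shows "Rk \<omega> k T b c \<subseteq> Rk \<omega> k S a c"
  using Rk_mono[OF assms(3)] Rk_trans[OF assms(1,2)] by (rule order_trans)

lemma k_ordered_iff_sorted_wrt: "k_ordered k Ss \<longleftrightarrow> sorted_wrt (\<lambda>A B. precZ (Zk k A) (Zk k B)) Ss"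
  by (auto simp: k_ordered_def sorted_wrt_iff_nth_less)

lemma precZ_mono: "precZ A B \<Longrightarrow> A' \<subseteq> A \<Longrightarrow> B' \<subseteq> B \<Longrightarrow> precZ A' B'"
  by (auto simp: precZ_def)

lemma k_ordered_disjoint_strips:
  assumes "k_ordered k Xs"
  shows "disjoint_family_on (\<lambda>j. strip_edges k (Xs ! j) a b) {..<length Xs}"
  unfolding disjoint_family_on_def
proof (intro ballI impI)
  fix i j assume "i \<in> {..<length Xs}" "j \<in> {..<length Xs}" "i \<noteq> j"
  then have "precZ (Zk k (Xs ! i)) (Zk k (Xs ! j)) \<or> precZ (Zk k (Xs ! j)) (Zk k (Xs ! i))"
    using assms unfolding k_ordered_def by (metis lessThan_iff linorder_neqE_nat)
  then have "Zk k (Xs ! i) \<inter> Zk k (Xs ! j) = {}" by (auto simp: precZ_def)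
  then show "strip_edges k (Xs ! i) a b \<inter> strip_edges k (Xs ! j) a b = {}"
    by (rule strip_edges_disjoint_rows)
qed

lemma k_ordered_chunk_unions:
  assumes "k_ordered k xs"
  shows "k_ordered k (map (\<lambda>Fs. \<Union>(set Fs)) (chunks B m xs))"
  unfolding k_ordered_iff_sorted_wrt
proof (rule sorted_wrt_map_mono[OF sorted_wrt_chunks])
  show "sorted_wrt (\<lambda>A B. precZ (Zk k A) (Zk k B)) xs" using assms by (simp add: k_ordered_iff_sorted_wrt)
  fix Fs Gs assume "\<forall>x\<in>set Fs. \<forall>y\<in>set Gs. precZ (Zk k x) (Zk k y)"
  then show "precZ (Zk k (\<Union>(set Fs))) (Zk k (\<Union>(set Gs)))"
    by (auto simp: precZ_def Zk_eq_image)
qed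

definition crossing_witnesses ::
  "(int \<Rightarrow> nat) \<Rightarrow> nat \<Rightarrow> (edge \<Rightarrow> bool) \<Rightarrow> int \<Rightarrow> int \<Rightarrow> int set list \<Rightarrow> int set list" where
  "crossing_witnesses \<xi>y k \<omega> a b Xs =
     map (\<lambda>X. some_fractal \<xi>y k (Rk \<omega> k X a b)) (filter (\<lambda>X. contains_fractal \<xi>y k (Rk \<omega> k X a b)) Xs)"

lemma length_crossing_witnesses:
  "length (crossing_witnesses \<xi>y k \<omega> a b Xs) = length (filter (\<lambda>X. contains_fractal \<xi>y k (Rk \<omega> k X a b)) Xs)"
  by (simp add: crossing_witnesses_def)

lemma crossing_witnesses_fractal_subset:
  assumes "W \<in> set (crossing_witnesses \<xi>y k \<omega> a b Xs)"
  shows "fractal \<xi>y k W" "W \<subseteq> Rk \<omega> k (\<Union>(set Xs)) a b"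
proof -
  obtain X where X: "X \<in> set Xs" "contains_fractal \<xi>y k (Rk \<omega> k X a b)"
    and W: "W = some_fractal \<xi>y k (Rk \<omega> k X a b)"
    using assms by (auto simp: crossing_witnesses_def)
  show "fractal \<xi>y k W" using some_fractal(2)[OF X(2)] W by simp
  have "Rk \<omega> k X a b \<subseteq> Rk \<omega> k (\<Union>(set Xs)) a b" using X(1) by (intro Rk_mono) auto
  then show "W \<subseteq> Rk \<omega> k (\<Union>(set Xs)) a b" using some_fractal(1)[OF X(2)] W by simp
qed

lemma k_ordered_crossing_witnesses:
  assumes "k_ordered k Xs"
  shows "k_ordered k (crossing_witnesses \<xi>y k \<omega> a b Xs)"
proof -
  have "sorted_wrt (\<lambda>A B. precZ (Zk k A) (Zk k B)) (filter (\<lambda>X. contains_fractal \<xi>y k (Rk \<omega> k X a b)) Xs)"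
    using assms by (simp add: k_ordered_iff_sorted_wrt sorted_wrt_filter)
  then show ?thesis
    unfolding k_ordered_iff_sorted_wrt crossing_witnesses_def
  proof (rule sorted_wrt_map_mono)
    fix X Y assume "X \<in> set (filter (\<lambda>X. contains_fractal \<xi>y k (Rk \<omega> k X a b)) Xs)"
      "Y \<in> set (filter (\<lambda>X. contains_fractal \<xi>y k (Rk \<omega> k X a b)) Xs)" "precZ (Zk k X) (Zk k Y)"
    then have "contains_fractal \<xi>y k (Rk \<omega> k X a b)" "contains_fractal \<xi>y k (Rk \<omega> k Y a b)"
      and XY: "precZ (Zk k X) (Zk k Y)" by auto
    from this(1,2)[THEN some_fractal(1), THEN Zk_subset_if_subset_Rk]
    show "precZ (Zk k (some_fractal \<xi>y k (Rk \<omega> k X a b))) (Zk k (some_fractal \<xi>y k (Rk \<omega> k Y a b)))"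
      by (rule precZ_mono[OF XY])
  qed
qed

lemma contains_family_if_crossings:
  assumes "a \<le> b" "b \<le> e" "k_ordered k Gs" "\<forall>G\<in>set Gs. G \<subseteq> Rk \<omega> k S a b"
    and "N \<le> length (filter (\<lambda>G. contains_fractal \<xi>y k (Rk \<omega> k G b e)) Gs)"
  shows "contains_family \<xi>y k N (Rk \<omega> k S a e)"
  unfolding contains_family_def
proof (intro exI conjI)
  let ?Ws = "take N (crossing_witnesses \<xi>y k \<omega> b e Gs)"
  show "length ?Ws = N" using assms(5) by (simp add: length_crossing_witnesses)
  show "k_ordered k ?Ws"
    using k_ordered_crossing_witnesses[OF assms(3)] by (simp add: k_ordered_iff_sorted_wrt)
  have "Rk \<omega> k (\<Union>(set Gs)) b e \<subseteq> Rk \<omega> k S a e"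
    using assms(4) by (intro Rk_subset_trans[OF assms(1,2)]) auto
  then show "\<forall>W\<in>set ?Ws. W \<subseteq> Rk \<omega> k S a e \<and> fractal \<xi>y k W"
    using crossing_witnesses_fractal_subset[of _ \<xi>y k \<omega> b e Gs] by (blast dest: in_set_takeD)
qed

definition witness_groups ::
  "(int \<Rightarrow> nat) \<Rightarrow> nat \<Rightarrow> nat \<Rightarrow> nat \<Rightarrow> (edge \<Rightarrow> bool) \<Rightarrow> int \<Rightarrow> int \<Rightarrow> int set list \<Rightarrow> int set list" where
  "witness_groups \<xi>y k B m \<omega> a b Ss = map (\<lambda>Fs. \<Union>(set Fs)) (chunks B m (crossing_witnesses \<xi>y k \<omega> a b Ss))"

lemma length_witness_groups [simp]: "length (witness_groups \<xi>y k B m \<omega> a b Ss) = m"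
  by (simp add: witness_groups_def)

lemma k_ordered_witness_groups: "k_ordered k Ss \<Longrightarrow> k_ordered k (witness_groups \<xi>y k B m \<omega> a b Ss)"
  unfolding witness_groups_def by (intro k_ordered_chunk_unions k_ordered_crossing_witnesses)

lemma witness_groups_cong:
  assumes "\<And>X. X \<in> set Ss \<Longrightarrow> Rk \<omega> k X a b = Rk \<omega>' k X a b"
  shows "witness_groups \<xi>y k B m \<omega> a b Ss = witness_groups \<xi>y k B m \<omega>' a b Ss"
proof -
  have "filter (\<lambda>X. contains_fractal \<xi>y k (Rk \<omega> k X a b)) Ss = filter (\<lambda>X. contains_fractal \<xi>y k (Rk \<omega>' k X a b)) Ss"
    by (rule filter_cong) (simp_all add: assms)
  then have "crossing_witnesses \<xi>y k \<omega> a b Ss = crossing_witnesses \<xi>y k \<omega>' a b Ss"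
    unfolding crossing_witnesses_def using assms by (auto intro!: map_cong)
  then show ?thesis by (simp add: witness_groups_def)
qed

lemma witness_groups_memE:
  assumes "k_ordered k Ss" and "m * B \<le> length (filter (\<lambda>X. contains_fractal \<xi>y k (Rk \<omega> k X a b)) Ss)"
    and "G \<in> set (witness_groups \<xi>y k B m \<omega> a b Ss)"
  obtains Fs where "G = \<Union>(set Fs)" "length Fs = B" "k_ordered k Fs" "\<forall>T\<in>set Fs. fractal \<xi>y k T"
    "G \<subseteq> Rk \<omega> k (\<Union>(set Ss)) a b"
proof -
  let ?Ws = "crossing_witnesses \<xi>y k \<omega> a b Ss"
  obtain Fs where Fs: "Fs \<in> set (chunks B m ?Ws)" "G = \<Union>(set Fs)"
    using assms(3) by (auto simp: witness_groups_def)
  have "length Fs = B"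
    using length_chunk[OF _ Fs(1)] assms(2) by (simp add: length_crossing_witnesses)
  moreover have "k_ordered k Fs"
    using sorted_wrt_chunk[OF _ Fs(1)] k_ordered_crossing_witnesses[OF assms(1)]
    by (simp add: k_ordered_iff_sorted_wrt)
  moreover have "\<forall>T\<in>set Fs. fractal \<xi>y k T \<and> T \<subseteq> Rk \<omega> k (\<Union>(set Ss)) a b"
    using set_chunk_subset[OF Fs(1)] crossing_witnesses_fractal_subset by blast
  ultimately show ?thesis using that Fs(2) by blast
qed

lemma finite_witness_group: "G \<in> set (witness_groups \<xi>y k B m \<omega> a b Ss) \<Longrightarrow> finite G"
  by (auto simp: witness_groups_def dest!: set_chunk_subset
      intro: fractal_finite crossing_witnesses_fractal_subset(1))

lemma contains_family_if_few_groups_fail: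
  assumes "a \<le> b" "b \<le> e" "k_ordered k Ss"
    and "m * B \<le> length (filter (\<lambda>X. contains_fractal \<xi>y k (Rk \<omega> k X a b)) Ss)"
    and "length (filter (\<lambda>G. \<not> contains_fractal \<xi>y k (Rk \<omega> k G b e)) (witness_groups \<xi>y k B m \<omega> a b Ss)) + N \<le> m"
  shows "contains_family \<xi>y k N (Rk \<omega> k (\<Union>(set Ss)) a e)"
proof (rule contains_family_if_crossings[OF assms(1,2) k_ordered_witness_groups[OF assms(3)]])
  show "\<forall>G\<in>set (witness_groups \<xi>y k B m \<omega> a b Ss). G \<subseteq> Rk \<omega> k (\<Union>(set Ss)) a b"
    using witness_groups_memE[OF assms(3,4)] by metis
  show "N \<le> length (filter (\<lambda>G. contains_fractal \<xi>y k (Rk \<omega> k G b e)) (witness_groups \<xi>y k B m \<omega> a b Ss))"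
    using assms(5) sum_length_filter_compl[of "\<lambda>G. contains_fractal \<xi>y k (Rk \<omega> k G b e)"
        "witness_groups \<xi>y k B m \<omega> a b Ss"] by simp
qed

section \<open>Crossing probabilities\<close>

lemma H_zero_seq: "H (\<lambda>_. 0) k m = 0"
  by (induction k arbitrary: m) auto

lemma Pr_not_crossing_good_block_le_u:
  assumes "fractal \<xi>y k T" "H \<xi>x k m = 0"
  shows "Pr p \<xi>x \<xi>y (\<lambda>\<omega>. \<not> contains_fractal \<xi>y k (Rk \<omega> k T (m * Lc ^ k) ((m + 1) * Lc ^ k))) \<le> u k p"
proof -
  let ?R = "\<lambda>\<omega>. Rk \<omega> k T (m * Lc ^ k) ((m + 1) * Lc ^ k)"
  have "Pr p \<xi>x \<xi>y (\<lambda>\<omega>. \<not> contains_fractal \<xi>y k (?R \<omega>))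
      \<le> Pr p \<xi>x \<xi>y (\<lambda>\<omega>. \<not> (\<exists>W. W \<subseteq> ?R \<omega> \<and> grouped k W \<and> fractal \<xi>y k W))"
    by (rule perc.event_prob_mono[OF _ finite_strip_edges depends_on_Rk])
       (use assms(1) fractal_finite in \<open>auto simp: contains_fractal_def\<close>)
  also have "\<dots> \<le> u k p"
    unfolding u_def
  proof (rule cSup_upper)
    show "bdd_above {Pr p \<xi>x \<xi>y (\<lambda>\<omega>. \<not> (\<exists>T. T \<subseteq> Rk \<omega> k S (m * Lc ^ k) ((m + 1) * Lc ^ k) \<and> grouped k T \<and> fractal \<xi>y k T)) |
       S m \<xi>x \<xi>y. fractal \<xi>y k S \<and> H \<xi>x k m = 0}"
      by (rule bdd_aboveI[where M=1]) (auto simp: perc.event_prob_le_1)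
  qed (use assms in blast)
  finally show ?thesis .
qed

lemma u_nonneg: "fractal \<xi>y k T \<Longrightarrow> 0 \<le> u k p"
  using Pr_not_crossing_good_block_le_u[OF _ H_zero_seq] perc.event_prob_nonneg by (rule order_trans[rotated])

lemma Pr_not_crossing_bad_block_le_v:
  assumes "H \<xi>x k m = h" "1 \<le> h" "length Fs = 2 ^ (4 * (h - 1))" "k_ordered k Fs"
    "\<forall>T\<in>set Fs. fractal \<xi>y k T"
  shows "Pr p \<xi>x \<xi>y (\<lambda>\<omega>. \<not> contains_fractal \<xi>y k (Rk \<omega> k (\<Union>(set Fs)) (m * Lc ^ k) ((m + 1) * Lc ^ k)))
    \<le> v k p"
  unfolding v_def contains_fractal_def
proof (rule cSup_upper)
  show "bdd_above {Pr p \<xi>x \<xi>y (\<lambda>\<omega>. \<not> (\<exists>T. T \<subseteq> Rk \<omega> k S (m * Lc ^ k) ((m + 1) * Lc ^ k) \<and> fractal \<xi>y k T)) |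
       h S m \<xi>x \<xi>y Ss. h \<ge> 1 \<and> H \<xi>x k m = h \<and> length Ss = 2 ^ (4 * (h - 1)) \<and>
         k_ordered k Ss \<and> (\<forall>T\<in>set Ss. fractal \<xi>y k T) \<and> S = \<Union>(set Ss)}"
    by (rule bdd_aboveI[where M=1]) (auto simp: perc.event_prob_le_1)
qed (use assms in blast)

text \<open>The coins of the strip left of \<open>b = m L^k\<close> decide whether \<open>X\<close> has crossed, and if so
  they determine a fractal set \<open>T\<close> reached at \<open>x = b\<close>; crossing the good block from \<open>T\<close> uses
  only coins right of \<open>b\<close> and fails with probability at most \<open>u\<close>.\<close>

lemma Pr_not_crossing_extend_good_block:
  assumes X: "finite X" and a: "a \<le> m * Lc ^ k" and good: "H \<xi>x k m = 0" and "0 \<le> u k p"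
  shows "Pr p \<xi>x \<xi>y (\<lambda>\<omega>. \<not> contains_fractal \<xi>y k (Rk \<omega> k X a ((m + 1) * Lc ^ k)))
    \<le> Pr p \<xi>x \<xi>y (\<lambda>\<omega>. \<not> contains_fractal \<xi>y k (Rk \<omega> k X a (m * Lc ^ k))) + u k p"
proof -
  define b where "b = m * Lc ^ k"
  define b' where "b' = (m + 1) * Lc ^ k"
  have "b \<le> b'" using Lc_pow_pos[of k] by (simp add: b_def b'_def algebra_simps)
  let ?crosses = "\<lambda>\<omega>. contains_fractal \<xi>y k (Rk \<omega> k X a b)"
  define T where "T c = some_fractal \<xi>y k (Rk c k X a b)" for c
  define E' where "E' c = (if ?crosses c then strip_edges k (T c) b b' else {})" for c
  define C where "C c = (if ?crosses c then (\<lambda>\<omega>. \<not> contains_fractal \<xi>y k (Rk \<omega> k (T c) b b')) else (\<lambda>_. False))" for c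
  have T: "T c \<subseteq> Rk c k X a b" "fractal \<xi>y k (T c)" if "?crosses c" for c
    using some_fractal[OF that] by (simp_all add: T_def)
  have "Pr p \<xi>x \<xi>y (\<lambda>\<omega>. \<not> contains_fractal \<xi>y k (Rk \<omega> k X a b'))
      \<le> Pr p \<xi>x \<xi>y (\<lambda>\<omega>. \<not> ?crosses \<omega>) + u k p"
  proof (rule perc.event_prob_two_stage_le[where E' = E' and C = C])
    show "finite (strip_edges k X a b)" using X by (rule finite_strip_edges)
    show "depends_on (strip_edges k X a b) (\<lambda>\<omega>. \<not> ?crosses \<omega>)" by (rule depends_on_Rk)
    show "finite (E' c)" for c
      by (cases "?crosses c") (simp_all add: E'_def finite_strip_edges fractal_finite[OF T(2)])
    show "E' c \<inter> strip_edges k X a b = {}" for c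
      using strip_edges_disjoint_columns[of b b k X a "T c" b'] by (auto simp: E'_def)
    show "depends_on (E' c) (C c)" for c
      using depends_on_Rk[where \<Phi> = "\<lambda>R. \<not> contains_fractal \<xi>y k R"]
      by (simp add: E'_def C_def depends_on_const)
    show "Pr p \<xi>x \<xi>y (C c) \<le> u k p" for c
      using Pr_not_crossing_good_block_le_u[OF T(2) good] \<open>0 \<le> u k p\<close>
      by (simp add: C_def b_def b'_def perc.event_prob_False)
  next
    fix \<omega> assume fails: "\<not> contains_fractal \<xi>y k (Rk \<omega> k X a b')"
    let ?c = "restrict \<omega> (strip_edges k X a b)"
    have same: "Rk ?c k X a b = Rk \<omega> k X a b" by (rule Rk_cong) simp
    show "\<not> ?crosses \<omega> \<or> C ?c \<omega>"
    proof (cases "?crosses \<omega>")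
      case True
      then have "T ?c \<subseteq> Rk \<omega> k X a b" using T(1)[of ?c] same by simp
      then have "Rk \<omega> k (T ?c) b b' \<subseteq> Rk \<omega> k X a b'"
        by (rule Rk_subset_trans[rotated 2]) (use a \<open>b \<le> b'\<close> in \<open>simp_all add: b_def\<close>)
      then show ?thesis using fails True same contains_fractal_mono by (auto simp: C_def)
    qed simp
  qed
  then show ?thesis by (simp add: b_def b'_def)
qed

lemma Pr_not_crossing_extend_good_blocks:
  assumes X: "finite X" and a: "a \<le> m * Lc ^ k" and good: "\<forall>t<n. H \<xi>x k (m + int t) = 0"
    and "0 \<le> u k p"
  shows "Pr p \<xi>x \<xi>y (\<lambda>\<omega>. \<not> contains_fractal \<xi>y k (Rk \<omega> k X a ((m + int n) * Lc ^ k)))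
    \<le> Pr p \<xi>x \<xi>y (\<lambda>\<omega>. \<not> contains_fractal \<xi>y k (Rk \<omega> k X a (m * Lc ^ k))) + n * u k p"
  using good
proof (induction n)
  case (Suc n)
  have "a \<le> (m + int n) * Lc ^ k"
    using a Lc_pow_pos[of k] by (smt (verit) mult_right_mono of_nat_0_le_iff)
  from Pr_not_crossing_extend_good_block[OF X this _ \<open>0 \<le> u k p\<close>, of \<xi>x \<xi>y] Suc
  show ?case by (simp add: algebra_simps)
qed simp

lemma Pr_fractal_not_crossing_good_blocks:
  assumes "fractal \<xi>y k T" "i0 \<le> i'" "\<forall>i\<in>{i0..<i'}. H \<xi>x k i = 0"
  shows "Pr p \<xi>x \<xi>y (\<lambda>\<omega>. \<not> contains_fractal \<xi>y k (Rk \<omega> k T (i0 * Lc ^ k) (i' * Lc ^ k)))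
    \<le> of_int (i' - i0) * u k p"
proof -
  define n where "n = nat (i' - i0)"
  have n: "i0 + int n = i'" "real n = of_int (i' - i0)" using assms(2) by (simp_all add: n_def)
  have "(\<lambda>\<omega>. \<not> contains_fractal \<xi>y k (Rk \<omega> k T (i0 * Lc ^ k) (i0 * Lc ^ k))) = (\<lambda>_. False)"
    using subset_Rk_self assms(1) unfolding contains_fractal_def by blast
  then have "Pr p \<xi>x \<xi>y (\<lambda>\<omega>. \<not> contains_fractal \<xi>y k (Rk \<omega> k T (i0 * Lc ^ k) (i0 * Lc ^ k))) = 0"
    by (simp add: perc.event_prob_False)
  moreover have "\<forall>t<n. H \<xi>x k (i0 + int t) = 0" using assms(3) by (auto simp: n_def)
  note Pr_not_crossing_extend_good_blocks[OF fractal_finite[OF assms(1)] order_refl this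
      u_nonneg[OF assms(1)], where p = p and \<xi>y = \<xi>y]
  ultimately show ?thesis unfolding n by simp
qed

lemma Pr_family_not_crossing_bad_then_good_blocks:
  assumes "H \<xi>x k i' = h" "1 \<le> h" "length Fs = 2 ^ (4 * (h - 1))" "k_ordered k Fs"
    "\<forall>T\<in>set Fs. fractal \<xi>y k T" and "i' \<le> i1" "\<forall>i\<in>{i'<..i1}. H \<xi>x k i = 0" and "0 \<le> u k p"
  shows "Pr p \<xi>x \<xi>y (\<lambda>\<omega>. \<not> contains_fractal \<xi>y k (Rk \<omega> k (\<Union>(set Fs)) (i' * Lc ^ k) ((i1 + 1) * Lc ^ k)))
    \<le> v k p + of_int (i1 - i') * u k p"
proof -
  define n where "n = nat (i1 - i')"
  have n: "i' + 1 + int n = i1 + 1" "real n = of_int (i1 - i')" using assms(6) by (simp_all add: n_def)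
  have "finite (\<Union>(set Fs))" using assms(5) fractal_finite by blast
  moreover have "i' * Lc ^ k \<le> (i' + 1) * Lc ^ k" using Lc_pow_pos[of k] by (simp add: algebra_simps)
  moreover have "\<forall>t<n. H \<xi>x k (i' + 1 + int t) = 0" using assms(7) by (auto simp: n_def)
  ultimately have "Pr p \<xi>x \<xi>y (\<lambda>\<omega>. \<not> contains_fractal \<xi>y k (Rk \<omega> k (\<Union>(set Fs)) (i' * Lc ^ k) ((i' + 1 + int n) * Lc ^ k)))
    \<le> Pr p \<xi>x \<xi>y (\<lambda>\<omega>. \<not> contains_fractal \<xi>y k (Rk \<omega> k (\<Union>(set Fs)) (i' * Lc ^ k) ((i' + 1) * Lc ^ k)))
      + n * u k p"
    using assms(8) by (rule Pr_not_crossing_extend_good_blocks)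
  then have "Pr p \<xi>x \<xi>y (\<lambda>\<omega>. \<not> contains_fractal \<xi>y k (Rk \<omega> k (\<Union>(set Fs)) (i' * Lc ^ k) ((i1 + 1) * Lc ^ k)))
    \<le> Pr p \<xi>x \<xi>y (\<lambda>\<omega>. \<not> contains_fractal \<xi>y k (Rk \<omega> k (\<Union>(set Fs)) (i' * Lc ^ k) ((i' + 1) * Lc ^ k)))
      + of_int (i1 - i') * u k p"
    unfolding n .
  also have "\<dots> \<le> v k p + of_int (i1 - i') * u k p"
    using Pr_not_crossing_bad_block_le_v[OF assms(1-5)] by simp
  finally show ?thesis .
qed

lemma depends_on_count_not_crossing:
  "depends_on (\<Union>X\<in>set Xs. strip_edges k X a b)
     (\<lambda>\<omega>. r \<le> length (filter (\<lambda>X. \<not> contains_fractal \<xi>y k (Rk \<omega> k X a b)) Xs))"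
  unfolding depends_on_def
proof (intro allI impI)
  fix \<omega> \<omega>' :: "edge \<Rightarrow> bool"
  assume "\<forall>e\<in>(\<Union>X\<in>set Xs. strip_edges k X a b). \<omega> e = \<omega>' e"
  then have "Rk \<omega> k X a b = Rk \<omega>' k X a b" if "X \<in> set Xs" for X
    using that by (intro Rk_cong) auto
  then show "(r \<le> length (filter (\<lambda>X. \<not> contains_fractal \<xi>y k (Rk \<omega> k X a b)) Xs)) =
             (r \<le> length (filter (\<lambda>X. \<not> contains_fractal \<xi>y k (Rk \<omega>' k X a b)) Xs))"
    by (metis (mono_tags, lifting) filter_cong)
qed

lemma Pr_many_not_crossing_le:
  assumes "k_ordered k Xs" "\<forall>X\<in>set Xs. finite X"
    and "\<And>X. X \<in> set Xs \<Longrightarrow> Pr p \<xi>x \<xi>y (\<lambda>\<omega>. \<not> contains_fractal \<xi>y k (Rk \<omega> k X a b)) \<le> \<gamma>"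
    and "0 \<le> \<gamma>"
  shows "Pr p \<xi>x \<xi>y (\<lambda>\<omega>. r \<le> length (filter (\<lambda>X. \<not> contains_fractal \<xi>y k (Rk \<omega> k X a b)) Xs))
    \<le> 2 ^ length Xs * \<gamma> ^ r"
proof -
  have "Pr p \<xi>x \<xi>y (\<lambda>\<omega>. r \<le> card {j\<in>{..<length Xs}. \<not> contains_fractal \<xi>y k (Rk \<omega> k (Xs ! j) a b)})
      \<le> 2 ^ card {..<length Xs} * \<gamma> ^ r"
  proof (rule perc.event_prob_count_ge_le[OF finite_lessThan k_ordered_disjoint_strips[OF assms(1)]])
    fix j assume "j \<in> {..<length Xs}"
    then have j: "Xs ! j \<in> set Xs" by simp
    show "finite (strip_edges k (Xs ! j) a b)" using assms(2) j by (simp add: finite_strip_edges)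
    show "depends_on (strip_edges k (Xs ! j) a b) (\<lambda>\<omega>. \<not> contains_fractal \<xi>y k (Rk \<omega> k (Xs ! j) a b))"
      by (rule depends_on_Rk)
    show "Pr p \<xi>x \<xi>y (\<lambda>\<omega>. \<not> contains_fractal \<xi>y k (Rk \<omega> k (Xs ! j) a b)) \<le> \<gamma>"
      using assms(3) j .
  qed (rule assms(4))
  then show ?thesis by (simp add: length_filter_conv_card)
qed

lemma Pr_many_groups_not_crossing_le:
  assumes "k_ordered k Ss"
    and right: "\<And>Fs. length Fs = B \<Longrightarrow> k_ordered k Fs \<Longrightarrow> \<forall>T\<in>set Fs. fractal \<xi>y k T \<Longrightarrow>
      Pr p \<xi>x \<xi>y (\<lambda>\<omega>. \<not> contains_fractal \<xi>y k (Rk \<omega> k (\<Union>(set Fs)) b e)) \<le> \<gamma>"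
    and "0 \<le> \<gamma>"
  shows "Pr p \<xi>x \<xi>y (\<lambda>\<omega>. m * B \<le> length (filter (\<lambda>X. contains_fractal \<xi>y k (Rk c k X a b)) Ss) \<and>
      r \<le> length (filter (\<lambda>G. \<not> contains_fractal \<xi>y k (Rk \<omega> k G b e)) (witness_groups \<xi>y k B m c a b Ss)))
    \<le> 2 ^ m * \<gamma> ^ r"
proof (cases "m * B \<le> length (filter (\<lambda>X. contains_fractal \<xi>y k (Rk c k X a b)) Ss)")
  case True
  have "Pr p \<xi>x \<xi>y (\<lambda>\<omega>. \<not> contains_fractal \<xi>y k (Rk \<omega> k G b e)) \<le> \<gamma>"
    if "G \<in> set (witness_groups \<xi>y k B m c a b Ss)" for G
    using witness_groups_memE[OF assms(1) True that] right by metis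
  then show ?thesis
    using Pr_many_not_crossing_le[OF k_ordered_witness_groups[OF assms(1)] _ _ assms(3)]
      finite_witness_group True by simp
qed (use \<open>0 \<le> \<gamma>\<close> in \<open>simp add: perc.event_prob_False\<close>)

section \<open>The two-stage bound\<close>

lemma Pr_no_family_two_stage_le:
  fixes B N :: nat
  assumes "a \<le> b" "b \<le> e"
    and Ss: "length Ss = 16 * B * N" "k_ordered k Ss" "\<forall>T\<in>set Ss. fractal \<xi>y k T"
    and left: "\<And>T. T \<in> set Ss \<Longrightarrow> Pr p \<xi>x \<xi>y (\<lambda>\<omega>. \<not> contains_fractal \<xi>y k (Rk \<omega> k T a b)) \<le> \<gamma>"
    and right: "\<And>Fs. length Fs = B \<Longrightarrow> k_ordered k Fs \<Longrightarrow> \<forall>T\<in>set Fs. fractal \<xi>y k T \<Longrightarrow>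
      Pr p \<xi>x \<xi>y (\<lambda>\<omega>. \<not> contains_fractal \<xi>y k (Rk \<omega> k (\<Union>(set Fs)) b e)) \<le> \<gamma>"
    and "0 \<le> \<gamma>"
  shows "Pr p \<xi>x \<xi>y (\<lambda>\<omega>. \<not> contains_family \<xi>y k N (Rk \<omega> k (\<Union>(set Ss)) a e))
    \<le> 2 ^ (16 * B * N) * \<gamma> ^ (8 * B * N) + 2 ^ (8 * N) * \<gamma> ^ (7 * N + 1)"
proof -
  define E where "E = strip_edges k (\<Union>(set Ss)) a b"
  define bad where "bad \<omega> \<longleftrightarrow> 8 * B * N \<le> length (filter (\<lambda>X. \<not> contains_fractal \<xi>y k (Rk \<omega> k X a b)) Ss)"
    for \<omega>
  let ?groups = "\<lambda>c. witness_groups \<xi>y k B (8 * N) c a b Ss"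
  let ?failures = "\<lambda>\<omega> c. length (filter (\<lambda>G. \<not> contains_fractal \<xi>y k (Rk \<omega> k G b e)) (?groups c))"
  define E' where "E' c = (\<Union>G\<in>set (?groups c). strip_edges k G b e)" for c
  define C where "C c \<omega> \<longleftrightarrow> 8 * N * B \<le> length (filter (\<lambda>X. contains_fractal \<xi>y k (Rk c k X a b)) Ss) \<and>
    7 * N + 1 \<le> ?failures \<omega> c" for c \<omega>
  have survivors: "8 * N * B \<le> length (filter (\<lambda>X. contains_fractal \<xi>y k (Rk c k X a b)) Ss)" if "\<not> bad c" for c
    using that Ss(1) sum_length_filter_compl[of "\<lambda>X. contains_fractal \<xi>y k (Rk c k X a b)" Ss]
    unfolding bad_def by (simp add: mult.commute mult.left_commute)
  have same_Rk: "Rk (restrict \<omega> E) k X a b = Rk \<omega> k X a b" if "X \<in> set Ss" for X \<omega>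
    using that strip_edges_mono[of X "\<Union>(set Ss)" k a b] by (intro Rk_cong) (auto simp: E_def)
  have "Pr p \<xi>x \<xi>y (\<lambda>\<omega>. \<not> contains_family \<xi>y k N (Rk \<omega> k (\<Union>(set Ss)) a e))
      \<le> Pr p \<xi>x \<xi>y bad + 2 ^ (8 * N) * \<gamma> ^ (7 * N + 1)"
  proof (rule perc.event_prob_two_stage_le[where E' = E' and C = C])
    show "finite E" unfolding E_def using Ss(3) by (intro finite_strip_edges) (auto intro: fractal_finite)
    show "depends_on E bad"
      unfolding bad_def[abs_def] E_def
      by (rule depends_on_mono[OF depends_on_count_not_crossing]) (intro UN_least strip_edges_mono; auto)
    show "finite (E' c)" for c
      using finite_witness_group by (auto simp: E'_def intro!: finite_strip_edges)
    show "E' c \<inter> E = {}" for c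
      using strip_edges_disjoint_columns[of b b k "\<Union>(set Ss)" a _ e] by (auto simp: E'_def E_def)
    show "depends_on (E' c) (C c)" for c
      using depends_on_conj[OF depends_on_const
          depends_on_count_not_crossing[where Xs = "?groups c" and a = b and b = e and r = "7 * N + 1"]]
      unfolding C_def[abs_def] E'_def by simp
    show "Pr p \<xi>x \<xi>y (C c) \<le> 2 ^ (8 * N) * \<gamma> ^ (7 * N + 1)" for c
      unfolding C_def[abs_def] by (rule Pr_many_groups_not_crossing_le[OF Ss(2) right \<open>0 \<le> \<gamma>\<close>])
  next
    fix \<omega> assume no_family: "\<not> contains_family \<xi>y k N (Rk \<omega> k (\<Union>(set Ss)) a e)"
    have restrict_E: "bad (restrict \<omega> E) = bad \<omega>" "?groups (restrict \<omega> E) = ?groups \<omega>"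
      using same_Rk by (simp_all add: bad_def cong: filter_cong) (rule witness_groups_cong)
    show "bad \<omega> \<or> C (restrict \<omega> E) \<omega>"
    proof (cases "bad \<omega>")
      case False
      then have "\<not> ?failures \<omega> \<omega> + N \<le> 8 * N"
        using contains_family_if_few_groups_fail[OF assms(1,2) Ss(2) survivors[OF False]] no_family by blast
      then show ?thesis using restrict_E False survivors[of "restrict \<omega> E"] by (simp add: C_def)
    qed simp
  qed
  also have "Pr p \<xi>x \<xi>y bad \<le> 2 ^ (16 * B * N) * \<gamma> ^ (8 * B * N)"
    using Pr_many_not_crossing_le[OF Ss(2) _ left \<open>0 \<le> \<gamma>\<close>] Ss(1,3) fractal_finite
    unfolding bad_def[abs_def] by metis
  finally show ?thesis by simp
qed

lemma two_stage_bound_le: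
  fixes \<gamma> :: real
  assumes "0 \<le> \<gamma>" "4 * \<gamma> \<le> 1" "1 \<le> B" "1 \<le> N"
  shows "2 ^ (16 * B * N) * \<gamma> ^ (8 * B * N) + 2 ^ (8 * N) * \<gamma> ^ (7 * N + 1) \<le> 272 * \<gamma> ^ 2"
proof -
  have "2 \<le> 8 * B * N" using mult_le_mono[OF assms(3,4)] by simp
  have "(2::real) ^ (16 * B * N) * \<gamma> ^ (8 * B * N) = (4 * \<gamma>) ^ (8 * B * N)"
    by (simp add: power_mult power_mult_distrib flip: mult.assoc)
  also have "\<dots> \<le> (4 * \<gamma>) ^ 2"
    by (rule power_decreasing[OF \<open>2 \<le> 8 * B * N\<close>]) (use assms(1,2) in auto)
  finally have first: "(2::real) ^ (16 * B * N) * \<gamma> ^ (8 * B * N) \<le> 16 * \<gamma> ^ 2"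
    by (simp add: power2_eq_square)
  have "(2::real) ^ (8 * N) = 256 ^ N" "\<gamma> ^ (7 * N + 1) = \<gamma> * (\<gamma> ^ 7) ^ N"
    by (simp_all add: power_mult)
  then have "(2::real) ^ (8 * N) * \<gamma> ^ (7 * N + 1) = \<gamma> * (256 * \<gamma> ^ 7) ^ N"
    by (simp add: power_mult_distrib)
  also have "\<dots> \<le> \<gamma> * (256 * \<gamma> ^ 7)"
  proof -
    have "\<gamma> ^ 7 \<le> (1 / 4) ^ 7" by (rule power_mono) (use assms(1,2) in auto)
    then have "256 * \<gamma> ^ 7 \<le> 1" by (simp add: power_divide)
    then have "(256 * \<gamma> ^ 7) ^ N \<le> (256 * \<gamma> ^ 7) ^ 1"
      by (intro power_decreasing assms(4)) (use assms(1) in auto)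
    then show ?thesis using assms(1) by (simp add: mult_left_mono)
  qed
  also have "\<dots> = 256 * \<gamma> ^ 8" by (simp add: power_Suc[symmetric] mult_ac del: power_Suc)
  also have "\<dots> \<le> 256 * \<gamma> ^ 2"
    using power_decreasing[of 2 8 \<gamma>] assms(1,2) by simp
  finally show ?thesis using first by simp
qed

lemma Pr_no_family_le:
  fixes B N :: nat
  assumes "a \<le> b" "b \<le> e" "1 \<le> B" "1 \<le> N"
    and Ss: "length Ss = 16 * B * N" "k_ordered k Ss" "\<forall>T\<in>set Ss. fractal \<xi>y k T"
    and left: "\<And>T. T \<in> set Ss \<Longrightarrow> Pr p \<xi>x \<xi>y (\<lambda>\<omega>. \<not> contains_fractal \<xi>y k (Rk \<omega> k T a b)) \<le> \<gamma>"
    and right: "\<And>Fs. length Fs = B \<Longrightarrow> k_ordered k Fs \<Longrightarrow> \<forall>T\<in>set Fs. fractal \<xi>y k T \<Longrightarrow>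
      Pr p \<xi>x \<xi>y (\<lambda>\<omega>. \<not> contains_fractal \<xi>y k (Rk \<omega> k (\<Union>(set Fs)) b e)) \<le> \<gamma>"
    and "0 \<le> \<gamma>"
  shows "Pr p \<xi>x \<xi>y (\<lambda>\<omega>. \<not> contains_family \<xi>y k N (Rk \<omega> k (\<Union>(set Ss)) a e)) \<le> 272 * \<gamma> ^ 2"
proof (cases "4 * \<gamma> \<le> 1")
  case True
  from Pr_no_family_two_stage_le[OF assms(1,2) Ss left right \<open>0 \<le> \<gamma>\<close>]
    two_stage_bound_le[OF \<open>0 \<le> \<gamma>\<close> True assms(3,4)]
  show ?thesis by (rule order_trans)
next
  case False
  then have "1 < 4 * \<gamma>" by simp
  from less_1_mult[OF this this] have "1 \<le> 272 * \<gamma> ^ 2" by (simp add: power2_eq_square)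
  with perc.event_prob_le_1 show ?thesis by (rule order_trans)
qed

lemma two_pow_split: "1 \<le> h \<Longrightarrow> 4 * h \<le> l \<Longrightarrow> (2::nat) ^ l = 16 * 2 ^ (4 * (h - 1)) * 2 ^ (l - 4 * h)"
proof -
  assume "1 \<le> h" "4 * h \<le> l"
  then have "l = 4 + 4 * (h - 1) + (l - 4 * h)" by simp
  then have "(2::nat) ^ l = 2 ^ 4 * 2 ^ (4 * (h - 1)) * 2 ^ (l - 4 * h)"
    unfolding power_add[symmetric] by (rule arg_cong)
  then show ?thesis by simp
qed

lemma Pr_stages_not_crossing_le:
  assumes "i0 \<le> i'" "i' \<le> i1" "i1 - i0 \<le> Lc - 1" "H \<xi>x k i' = h" "1 \<le> h"
    and "\<forall>i\<in>{i0..i1} - {i'}. H \<xi>x k i = 0" and u0: "0 \<le> u k p"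
  shows "fractal \<xi>y k T \<Longrightarrow>
      Pr p \<xi>x \<xi>y (\<lambda>\<omega>. \<not> contains_fractal \<xi>y k (Rk \<omega> k T (i0 * Lc ^ k) (i' * Lc ^ k)))
        \<le> Lc * max (u k p) (v k p)"
    and "length Fs = 2 ^ (4 * (h - 1)) \<Longrightarrow> k_ordered k Fs \<Longrightarrow> \<forall>T\<in>set Fs. fractal \<xi>y k T \<Longrightarrow>
      Pr p \<xi>x \<xi>y (\<lambda>\<omega>. \<not> contains_fractal \<xi>y k (Rk \<omega> k (\<Union>(set Fs)) (i' * Lc ^ k) ((i1 + 1) * Lc ^ k)))
        \<le> Lc * max (u k p) (v k p)"
proof -
  define M where "M = max (u k p) (v k p)"
  have L: "of_int (i' - i0) \<le> real_of_int Lc" "of_int (i1 - i') \<le> real_of_int Lc - 1"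
    using assms(1-3) by linarith+
  show "Pr p \<xi>x \<xi>y (\<lambda>\<omega>. \<not> contains_fractal \<xi>y k (Rk \<omega> k T (i0 * Lc ^ k) (i' * Lc ^ k)))
      \<le> Lc * max (u k p) (v k p)" if "fractal \<xi>y k T"
  proof -
    have "Pr p \<xi>x \<xi>y (\<lambda>\<omega>. \<not> contains_fractal \<xi>y k (Rk \<omega> k T (i0 * Lc ^ k) (i' * Lc ^ k)))
        \<le> of_int (i' - i0) * u k p"
      by (rule Pr_fractal_not_crossing_good_blocks[OF that]) (use assms(1,2,6) in auto)
    also have "\<dots> \<le> Lc * M" unfolding M_def using L(1) u0 by (intro mult_mono) (auto simp: Lc_def)
    finally show ?thesis by (simp add: M_def)
  qed
  show "Pr p \<xi>x \<xi>y (\<lambda>\<omega>. \<not> contains_fractal \<xi>y k (Rk \<omega> k (\<Union>(set Fs)) (i' * Lc ^ k) ((i1 + 1) * Lc ^ k)))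
      \<le> Lc * max (u k p) (v k p)"
    if Fs: "length Fs = 2 ^ (4 * (h - 1))" "k_ordered k Fs" "\<forall>T\<in>set Fs. fractal \<xi>y k T"
  proof -
    have "Pr p \<xi>x \<xi>y (\<lambda>\<omega>. \<not> contains_fractal \<xi>y k (Rk \<omega> k (\<Union>(set Fs)) (i' * Lc ^ k) ((i1 + 1) * Lc ^ k)))
        \<le> v k p + of_int (i1 - i') * u k p"
      by (rule Pr_family_not_crossing_bad_then_good_blocks[OF assms(4,5) Fs assms(2) _ u0])
         (use assms(1,6) in auto)
    also have "of_int (i1 - i') * u k p \<le> (real_of_int Lc - 1) * M"
      unfolding M_def using L(2) u0 assms(1-3) by (intro mult_mono) auto
    then have "v k p + of_int (i1 - i') * u k p \<le> Lc * M" by (simp add: M_def algebra_simps)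
    finally show ?thesis by (simp add: M_def)
  qed
qed

theorem lemma5p5:
  fixes k h l :: nat and p :: real and \<xi>x \<xi>y :: "int \<Rightarrow> nat"
    and i0 i1 i' :: int and S :: "int set" and Ss :: "int set list"
  assumes "0 \<le> p" "p \<le> 1"
    and "0 \<le> i1 - i0" "i1 - i0 \<le> Lc - 1"
    and "i0 \<le> i'" "i' \<le> i1"
    and "H \<xi>x k i' = h" "h > 0"
    and "\<forall>i\<in>{i0..i1} - {i'}. H \<xi>x k i = 0"
    and "length Ss = 2 ^ l" "k_ordered k Ss" "\<forall>T\<in>set Ss. fractal \<xi>y k T"
    and "S = \<Union>(set Ss)"
    and "l \<ge> 4 * h"
  shows "Pr p \<xi>x \<xi>y
           (\<lambda>\<omega>. \<not> contains_family \<xi>y k (2 ^ (l - 4 * h)) (Rk \<omega> k S (i0 * Lc ^ k) ((i1 + 1) * Lc ^ k)))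
         \<le> real_of_int Lc ^ 5 * (max (u k p) (v k p)) ^ 2"
proof -
  define \<gamma> where "\<gamma> = real_of_int Lc * max (u k p) (v k p)"
  have u0: "0 \<le> u k p" using assms(10,12) u_nonneg by (metis length_0_conv nth_mem pos2 zero_less_power)
  then have "0 \<le> \<gamma>" by (simp add: \<gamma>_def Lc_def)
  have len: "length Ss = 16 * 2 ^ (4 * (h - 1)) * 2 ^ (l - 4 * h)"
    using two_pow_split[of h l] assms(8,10,14) by simp
  note stages = Pr_stages_not_crossing_le[OF assms(5,6,4,7) _ assms(9) u0, folded \<gamma>_def]
  have "i0 * Lc ^ k \<le> i' * Lc ^ k" "i' * Lc ^ k \<le> (i1 + 1) * Lc ^ k"
    using assms(5,6) Lc_pow_pos[of k] by (simp_all add: mult_right_mono)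
  then have "Pr p \<xi>x \<xi>y (\<lambda>\<omega>. \<not> contains_family \<xi>y k (2 ^ (l - 4 * h)) (Rk \<omega> k S (i0 * Lc ^ k) ((i1 + 1) * Lc ^ k)))
      \<le> 272 * \<gamma> ^ 2"
    unfolding assms(13)
    by (rule Pr_no_family_le[OF _ _ _ _ len assms(11,12) stages \<open>0 \<le> \<gamma>\<close>]) (use assms(8,12) in auto)
  also have "\<dots> \<le> real_of_int Lc ^ 5 * (max (u k p) (v k p)) ^ 2"
    by (simp add: \<gamma>_def Lc_def power_mult_distrib)
  finally show ?thesis .
qed

end
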